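(* Let $G$ be a vigorous approximately full subgroup of $\operatorname{Homeo}(\mathfrak{C})$. Then $G$ is strongly approximately full. Consequently, for vigorous subgroups of $\operatorname{Homeo}(\mathfrak{C})$, being approximately full and being strongly approximately full are equivalent.
   Context: $\mathfrak{C}$ denotes a Cantor space (a space homeomorphic to $\{0,1\}^\omega$). Groups of homeomorphisms act on the right. $K_{\mathfrak{C}}$ denotes the set of non-empty proper clopen subsets of $\mathfrak{C}$. For $\gamma\in\operatorname{Homeo}(\mathfrak{C})$, $\operatorname{supp}(\gamma)=\{p\in\mathfrak{C}: p\gamma\neq p\}$. A subset $S\subseteq \operatorname{Homeo}(\mathfrak{C})$ is vigorous if for all clopen $A,B,C\subseteq\mathfrak{C}$ with $B,C$ non-empty proper subsets of $A$ there is $\gamma\in S$ with $\operatorname{supp}(\gamma)\subseteq A$ and $B\gamma\subseteq C$. $G$ is approximately full if whenever $\Gamma\subseteq G$ is finite, $\{D_\gamma\}_{\gamma\in\Gamma}$ is a partition of $\mathfrak{C}$ into clopen sets such that $\{D_\gamma\gamma\}_{\gamma\in\Gamma}$ is also a partition of $\mathfrak{C}$, and $\delta\in\Gamma$, there exists $\chi\in G$ with $\chi|_{D_\gamma}=\gamma|_{D_\gamma}$ for every $\gamma\in\Gamma\setminus\{\delta\}$. $G$ is strongly approximately full if for all $D,R\in K_{\mathfrak{C}}$, every finite $\Gamma\subseteq G$ and every partition $\{D_\gamma\}_{\gamma\in\Gamma}$ of $D$ into clopen sets such that $\{D_\gamma\gamma\}_{\gamma\in\Gamma}$ is a partition of $R$,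 there exists $\chi\in G$ with $\chi|_{D_\gamma}=\gamma|_{D_\gamma}$ for every $\gamma\in\Gamma$. *)

theory Defs
  imports "HOL-Analysis.Analysis"
begin

definition cantor_top :: "(nat \<Rightarrow> bool) topology" where
  "cantor_top = product_topology (\<lambda>_. discrete_topology (UNIV :: bool set)) (UNIV :: nat set)"

definition cantor_space :: "'a topology \<Rightarrow> bool" where
  "cantor_space X \<longleftrightarrow> X homeomorphic_space cantor_top"

definition Homeo :: "'a topology \<Rightarrow> ('a \<Rightarrow> 'a) set" where
  "Homeo X = {f. homeomorphic_map X X f \<and> (\<forall>x. x \<notin> topspace X \<longrightarrow> f x = x)}"

definition homeo_subgroup :: "'a topology \<Rightarrow> ('a \<Rightarrow> 'a) set \<Rightarrow> bool" where
  "homeo_subgroup X G \<longleftrightarrow> G \<subseteq> Homeo X \<and> id \<in> G \<and>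
     (\<forall>f\<in>G. \<forall>g\<in>G. f \<circ> g \<in> G) \<and>
     (\<forall>f\<in>G. \<exists>g\<in>G. f \<circ> g = id \<and> g \<circ> f = id)"

definition clopen :: "'a topology \<Rightarrow> 'a set \<Rightarrow> bool" where
  "clopen X A \<longleftrightarrow> openin X A \<and> closedin X A"

definition Kset :: "'a topology \<Rightarrow> 'a set set" where
  "Kset X = {A. clopen X A \<and> A \<noteq> {} \<and> A \<subset> topspace X}"

definition supp :: "'a topology \<Rightarrow> ('a \<Rightarrow> 'a) \<Rightarrow> 'a set" where
  "supp X g = {p \<in> topspace X. g p \<noteq> p}"

text \<open>Right action: B\<gamma> is the image of B under \<gamma>.\<close>
definition vigorous :: "'a topology \<Rightarrow> ('a \<Rightarrow> 'a) set \<Rightarrow> bool" where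
  "vigorous X S \<longleftrightarrow>
     (\<forall>A B C. clopen X A \<and> clopen X B \<and> clopen X C \<and>
        B \<noteq> {} \<and> C \<noteq> {} \<and> B \<subset> A \<and> C \<subset> A \<longrightarrow>
        (\<exists>g\<in>S. supp X g \<subseteq> A \<and> g ` B \<subseteq> C))"

definition clopen_partition :: "'a topology \<Rightarrow> 'i set \<Rightarrow> ('i \<Rightarrow> 'a set) \<Rightarrow> 'a set \<Rightarrow> bool" where
  "clopen_partition X I P U \<longleftrightarrow>
     (\<forall>i\<in>I. clopen X (P i) \<and> P i \<noteq> {}) \<and>
     (\<forall>i\<in>I. \<forall>j\<in>I. i \<noteq> j \<longrightarrow> P i \<inter> P j = {}) \<and>
     (\<Union>i\<in>I. P i) = U"

definition set_partition :: "'i set \<Rightarrow> ('i \<Rightarrow> 'a set) \<Rightarrow> 'a set \<Rightarrow> bool" where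
  "set_partition I P U \<longleftrightarrow>
     (\<forall>i\<in>I. P i \<noteq> {}) \<and>
     (\<forall>i\<in>I. \<forall>j\<in>I. i \<noteq> j \<longrightarrow> P i \<inter> P j = {}) \<and>
     (\<Union>i\<in>I. P i) = U"

definition approx_full :: "'a topology \<Rightarrow> ('a \<Rightarrow> 'a) set \<Rightarrow> bool" where
  "approx_full X G \<longleftrightarrow>
     (\<forall>\<Gamma> D \<delta>. \<Gamma> \<subseteq> G \<and> finite \<Gamma> \<and>
        clopen_partition X \<Gamma> D (topspace X) \<and>
        set_partition \<Gamma> (\<lambda>g. g ` D g) (topspace X) \<and> \<delta> \<in> \<Gamma> \<longrightarrow>
        (\<exists>k\<in>G. \<forall>g\<in>\<Gamma> - {\<delta>}. \<forall>x\<in>D g. k x = g x))"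

definition strongly_approx_full :: "'a topology \<Rightarrow> ('a \<Rightarrow> 'a) set \<Rightarrow> bool" where
  "strongly_approx_full X G \<longleftrightarrow>
     (\<forall>Dom R \<Gamma> D. Dom \<in> Kset X \<and> R \<in> Kset X \<and> \<Gamma> \<subseteq> G \<and> finite \<Gamma> \<and>
        clopen_partition X \<Gamma> D Dom \<and>
        set_partition \<Gamma> (\<lambda>g. g ` D g) R \<longrightarrow>
        (\<exists>k\<in>G. \<forall>g\<in>\<Gamma>. \<forall>x\<in>D g. k x = g x))"

end

theory Submission
  imports Defs
begin

text \<open>The pieces D g, g \<in> \<Gamma>, glue to a map from U onto V that is piecewise in G. It is
  extended by a map from the complement of U onto the complement of V, again piecewise in G; then
  approximate fullness applied to the resulting partition of the whole space gives one element of
  G agreeing with every piece except one dropped block of the extension. The extension is built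
  from two elements provided by vigour: u moves U strictly inside V (a nonempty clopen subset of
  Cantor space can always be split) and \<tau> moves V off itself. The dropped block carries \<tau> u,
  which maps U outside V, so it differs from every element of \<Gamma> and all the pieces D g survive.
  Conversely, strong approximate fullness applied to the complements of the dropped block and of
  its image gives approximate fullness.\<close>

lemma clopen_subset: "clopen X A \<Longrightarrow> A \<subseteq> topspace X"
  by (simp add: clopen_def openin_subset)

lemma clopen_topspace: "clopen X (topspace X)"
  by (simp add: clopen_def)

lemma clopen_Un: "clopen X A \<Longrightarrow> clopen X B \<Longrightarrow> clopen X (A \<union> B)"
  by (auto simp: clopen_def)

lemma clopen_Int: "clopen X A \<Longrightarrow> clopen X B \<Longrightarrow> clopen X (A \<inter> B)"
  by (auto simp: clopen_def)

lemma clopen_Diff: "clopen X A \<Longrightarrow> clopen X B \<Longrightarrow> clopen X (A - B)"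
  by (auto simp: clopen_def)

lemma clopen_Union: "finite F \<Longrightarrow> (\<And>A. A \<in> F \<Longrightarrow> clopen X A) \<Longrightarrow> clopen X (\<Union>F)"
  by (induction F rule: finite_induct) (auto simp: clopen_Un clopen_def)

lemma clopen_homeomorphic_image:
  assumes "homeomorphic_map X Y f" "clopen X A"
  shows "clopen Y (f ` A)"
  using assms clopen_subset[OF assms(2)]
    homeomorphic_map_openness[OF assms(1)] homeomorphic_map_closedness[OF assms(1)]
  unfolding clopen_def by simp

lemma clopen_cantor_top_coordinate: "clopen cantor_top {x. x m = b}"
proof -
  have proj: "continuous_map cantor_top (discrete_topology UNIV) (\<lambda>x. x m)"
    unfolding cantor_top_def by (rule continuous_map_product_projection) simp
  have "clopen cantor_top {x \<in> topspace cantor_top. x m \<in> {b}}"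
    unfolding clopen_def
    using openin_continuous_map_preimage[OF proj, of "{b}"] closedin_continuous_map_preimage[OF proj, of "{b}"]
    by auto
  then show ?thesis
    by (simp add: cantor_top_def)
qed

text \<open>A basic open set only constrains finitely many coordinates; flipping a free coordinate
  of a point of a clopen set stays inside it, so cutting along that coordinate splits the set.\<close>
lemma cantor_top_clopen_split:
  assumes "clopen cantor_top U" "U \<noteq> {}"
  obtains V where "clopen cantor_top V" "V \<noteq> {}" "V \<subset> U"
proof -
  obtain p where p: "p \<in> U" using assms(2) by auto
  obtain W where W: "finite {i. W i \<noteq> UNIV}" "p \<in> Pi\<^sub>E UNIV W" "Pi\<^sub>E UNIV W \<subseteq> U"
    using assms(1) p unfolding clopen_def cantor_top_def openin_product_topology_alt by auto
  obtain m where "m \<notin> {i. W i \<noteq> UNIV}"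
    using ex_new_if_finite[OF infinite_UNIV_nat W(1)] by blast
  then have m: "W m = UNIV"
    by simp
  define V where "V = U \<inter> {x. x m = p m}"
  have "\<forall>i. p i \<in> W i"
    using W(2) by (simp add: PiE_UNIV_domain Pi_iff)
  then have "p(m := \<not> p m) \<in> Pi\<^sub>E UNIV W"
    using m by (simp add: PiE_UNIV_domain Pi_iff)
  then have "p(m := \<not> p m) \<in> U"
    using W(3) by blast
  moreover have "p(m := \<not> p m) \<notin> V" "V \<subseteq> U"
    by (simp_all add: V_def)
  ultimately have "V \<subset> U"
    by blast
  have "clopen cantor_top V"
    using assms(1) clopen_cantor_top_coordinate unfolding V_def by (rule clopen_Int)
  moreover have "V \<noteq> {}"
    using p unfolding V_def by blast
  ultimately show thesis
    using \<open>V \<subset> U\<close> by (rule that)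
qed

lemma cantor_space_clopen_split:
  assumes "cantor_space X" "clopen X U" "U \<noteq> {}"
  obtains V where "clopen X V" "V \<noteq> {}" "V \<subset> U"
proof -
  obtain f g where fg: "homeomorphic_maps X cantor_top f g"
    using assms(1) by (auto simp: cantor_space_def homeomorphic_space_def)
  then have f: "homeomorphic_map X cantor_top f" and g: "homeomorphic_map cantor_top X g"
    using homeomorphic_maps_map by blast+
  have gf: "g (f x) = x" if "x \<in> U" for x
    using fg clopen_subset[OF assms(2)] that unfolding homeomorphic_maps_def by blast
  have "clopen cantor_top (f ` U)" "f ` U \<noteq> {}"
    using clopen_homeomorphic_image[OF f assms(2)] assms(3) by simp_all
  then obtain V where V: "clopen cantor_top V" "V \<noteq> {}" "V \<subset> f ` U"
    by (rule cantor_top_clopen_split)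
  have "inj_on g (f ` U)"
  proof (rule inj_onI)
    fix y z assume "y \<in> f ` U" "z \<in> f ` U" "g y = g z"
    then show "y = z"
      using gf by auto
  qed
  then have "g ` V \<subset> g ` f ` U"
    using V(3) by (rule image_strict_mono)
  also have "g ` f ` U = U"
    using gf by (simp add: image_comp)
  finally have "g ` V \<subset> U" .
  moreover have "g ` V \<noteq> {}"
    using V(2) by simp
  ultimately show thesis
    using clopen_homeomorphic_image[OF g V(1)] by (intro that)
qed

lemma homeo_subgroup_id: "homeo_subgroup X G \<Longrightarrow> id \<in> G"
  by (simp add: homeo_subgroup_def)

lemma homeo_subgroup_comp: "homeo_subgroup X G \<Longrightarrow> f \<in> G \<Longrightarrow> g \<in> G \<Longrightarrow> f \<circ> g \<in> G"
  by (simp add: homeo_subgroup_def)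

lemma homeo_subgroup_bij_inv:
  assumes "homeo_subgroup X G" "g \<in> G"
  shows "bij g" "inv g \<in> G"
proof -
  obtain h where h: "h \<in> G" "g \<circ> h = id" "h \<circ> g = id"
    using assms unfolding homeo_subgroup_def by blast
  show "bij g"
    using h o_bij by blast
  show "inv g \<in> G"
    using h inv_unique_comp by metis
qed

lemma homeo_subgroup_homeomorphic_map:
  "homeo_subgroup X G \<Longrightarrow> g \<in> G \<Longrightarrow> homeomorphic_map X X g"
  by (auto simp: homeo_subgroup_def Homeo_def)

lemma homeo_subgroup_image_topspace:
  "homeo_subgroup X G \<Longrightarrow> g \<in> G \<Longrightarrow> g ` topspace X = topspace X"
  by (simp add: homeo_subgroup_homeomorphic_map homeomorphic_imp_surjective_map)

lemma homeo_subgroup_clopen_image: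
  "homeo_subgroup X G \<Longrightarrow> g \<in> G \<Longrightarrow> clopen X A \<Longrightarrow> clopen X (g ` A)"
  by (rule clopen_homeomorphic_image[OF homeo_subgroup_homeomorphic_map])

lemma vigorous_mapsto:
  assumes "vigorous X G" "clopen X B" "clopen X C" "B \<noteq> {}" "C \<noteq> {}"
    "B \<subset> topspace X" "C \<subset> topspace X"
  obtains g where "g \<in> G" "g ` B \<subseteq> C"
  using assms clopen_topspace unfolding vigorous_def by meson

text \<open>A bijection from U onto V that agrees with an element of G on each piece of a finite
  clopen partition of U, encoded as the finite set of pairs (piece, element); empty pieces are
  allowed.\<close>
definition piecewise_bij ::
    "'a topology \<Rightarrow> ('a \<Rightarrow> 'a) set \<Rightarrow> ('a set \<times> ('a \<Rightarrow> 'a)) set \<Rightarrow> 'a set \<Rightarrow> 'a set \<Rightarrow> bool" where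
  "piecewise_bij X G F U V \<longleftrightarrow> finite F \<and> (\<forall>(P, g)\<in>F. clopen X P \<and> g \<in> G) \<and>
     (\<forall>(P, g)\<in>F. \<forall>(P', g')\<in>F. (P, g) \<noteq> (P', g') \<longrightarrow> P \<inter> P' = {} \<and> g ` P \<inter> g' ` P' = {}) \<and>
     (\<Union>(P, g)\<in>F. P) = U \<and> (\<Union>(P, g)\<in>F. g ` P) = V"

lemma piecewise_bijI:
  assumes "finite F" "\<And>P g. (P, g) \<in> F \<Longrightarrow> clopen X P \<and> g \<in> G"
    and "\<And>P g P' g'. (P, g) \<in> F \<Longrightarrow> (P', g') \<in> F \<Longrightarrow> (P, g) \<noteq> (P', g') \<Longrightarrow>
           P \<inter> P' = {} \<and> g ` P \<inter> g' ` P' = {}"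
    and "(\<Union>(P, g)\<in>F. P) = U" "(\<Union>(P, g)\<in>F. g ` P) = V"
  shows "piecewise_bij X G F U V"
  using assms unfolding piecewise_bij_def by fast

lemma
  assumes "piecewise_bij X G F U V"
  shows piecewise_bij_finite: "finite F"
    and piecewise_bij_clopen: "(P, g) \<in> F \<Longrightarrow> clopen X P"
    and piecewise_bij_mem: "(P, g) \<in> F \<Longrightarrow> g \<in> G"
    and piecewise_bij_disjoint: "(P, g) \<in> F \<Longrightarrow> (P', g') \<in> F \<Longrightarrow> (P, g) \<noteq> (P', g') \<Longrightarrow>
           P \<inter> P' = {}"
    and piecewise_bij_disjoint_image: "(P, g) \<in> F \<Longrightarrow> (P', g') \<in> F \<Longrightarrow> (P, g) \<noteq> (P', g') \<Longrightarrow>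
           g ` P \<inter> g' ` P' = {}"
    and piecewise_bij_domain: "(\<Union>(P, g)\<in>F. P) = U"
    and piecewise_bij_range: "(\<Union>(P, g)\<in>F. g ` P) = V"
  using assms unfolding piecewise_bij_def by fast+

lemma piecewise_bij_piece_subset:
  assumes "piecewise_bij X G F U V" "(P, g) \<in> F"
  shows "P \<subseteq> U \<and> g ` P \<subseteq> V"
proof -
  have "P \<subseteq> (\<Union>(P, g)\<in>F. P)" "g ` P \<subseteq> (\<Union>(P, g)\<in>F. g ` P)"
    using assms(2) by force+
  then show ?thesis
    using piecewise_bij_domain[OF assms(1)] piecewise_bij_range[OF assms(1)] by simp
qed

lemma piecewise_bij_singleton:
  "g \<in> G \<Longrightarrow> clopen X U \<Longrightarrow> piecewise_bij X G {(U, g)} U (g ` U)"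
  by (simp add: piecewise_bij_def)

lemma piecewise_bij_Un:
  assumes F: "piecewise_bij X G F U V" and F': "piecewise_bij X G F' U' V'"
    and disj: "U \<inter> U' = {}" "V \<inter> V' = {}"
  shows "piecewise_bij X G (F \<union> F') (U \<union> U') (V \<union> V')"
proof (rule piecewise_bijI)
  fix P g P' g'
  assume P: "(P, g) \<in> F \<union> F'" and P': "(P', g') \<in> F \<union> F'" and ne: "(P, g) \<noteq> (P', g')"
  have across: "P \<inter> P' = {} \<and> g ` P \<inter> g' ` P' = {}"
    if "(P, g) \<in> F" "(P', g') \<in> F'" for P g P' g'
    using piecewise_bij_piece_subset[OF F that(1)] piecewise_bij_piece_subset[OF F' that(2)] disj
    by blast
  from P P' show "P \<inter> P' = {} \<and> g ` P \<inter> g' ` P' = {}"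
  proof (elim UnE)
    assume "(P, g) \<in> F" "(P', g') \<in> F"
    then show ?thesis
      using piecewise_bij_disjoint[OF F _ _ ne] piecewise_bij_disjoint_image[OF F _ _ ne] by simp
  next
    assume "(P, g) \<in> F'" "(P', g') \<in> F'"
    then show ?thesis
      using piecewise_bij_disjoint[OF F' _ _ ne] piecewise_bij_disjoint_image[OF F' _ _ ne] by simp
  next
    assume "(P, g) \<in> F" "(P', g') \<in> F'"
    then show ?thesis
      by (rule across)
  next
    assume "(P, g) \<in> F'" "(P', g') \<in> F"
    then show ?thesis
      using across by blast
  qed
next
  show "finite (F \<union> F')"
    using piecewise_bij_finite[OF F] piecewise_bij_finite[OF F'] by simp
  show "clopen X P \<and> g \<in> G" if "(P, g) \<in> F \<union> F'" for P g
    using that piecewise_bij_clopen[OF F] piecewise_bij_mem[OF F]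
      piecewise_bij_clopen[OF F'] piecewise_bij_mem[OF F'] by blast
  show "(\<Union>(P, g)\<in>F \<union> F'. P) = U \<union> U'"
    using piecewise_bij_domain[OF F] piecewise_bij_domain[OF F'] by (simp add: UN_Un)
  show "(\<Union>(P, g)\<in>F \<union> F'. g ` P) = V \<union> V'"
    using piecewise_bij_range[OF F] piecewise_bij_range[OF F'] by (simp add: UN_Un)
qed

lemma piecewise_bij_comp_left:
  assumes G: "homeo_subgroup X G" and h: "h \<in> G" and F: "piecewise_bij X G F U V"
  shows "piecewise_bij X G ((\<lambda>(P, g). (P, h \<circ> g)) ` F) U (h ` V)"
proof (rule piecewise_bijI)
  show "finite ((\<lambda>(P, g). (P, h \<circ> g)) ` F)"
    using piecewise_bij_finite[OF F] by simp
next
  fix P g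
  assume "(P, g) \<in> (\<lambda>(P, g). (P, h \<circ> g)) ` F"
  then obtain f where f: "(P, f) \<in> F" "g = h \<circ> f"
    by auto
  show "clopen X P \<and> g \<in> G"
    using piecewise_bij_clopen[OF F f(1)] homeo_subgroup_comp[OF G h piecewise_bij_mem[OF F f(1)]] f(2)
    by simp
next
  fix P g P' g'
  assume "(P, g) \<in> (\<lambda>(P, g). (P, h \<circ> g)) ` F" "(P', g') \<in> (\<lambda>(P, g). (P, h \<circ> g)) ` F"
    and ne: "(P, g) \<noteq> (P', g')"
  then obtain f f' where f: "(P, f) \<in> F" "g = h \<circ> f" and f': "(P', f') \<in> F" "g' = h \<circ> f'"
    by auto
  with ne have "(P, f) \<noteq> (P', f')"
    by auto
  then have "P \<inter> P' = {}" "f ` P \<inter> f' ` P' = {}"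
    using piecewise_bij_disjoint[OF F f(1) f'(1)] piecewise_bij_disjoint_image[OF F f(1) f'(1)]
    by simp_all
  moreover have "inj h"
    using homeo_subgroup_bij_inv[OF G h] bij_is_inj by blast
  then have "h ` (f ` P \<inter> f' ` P') = h ` f ` P \<inter> h ` f' ` P'"
    by (rule image_Int)
  ultimately show "P \<inter> P' = {} \<and> g ` P \<inter> g' ` P' = {}"
    by (simp add: f f' image_comp)
next
  show "(\<Union>(P, g)\<in>(\<lambda>(P, g). (P, h \<circ> g)) ` F. P) = U"
    using piecewise_bij_domain[OF F] by (simp add: case_prod_beta)
  have "(\<Union>(P, g)\<in>(\<lambda>(P, g). (P, h \<circ> g)) ` F. g ` P) = h ` (\<Union>(P, g)\<in>F. g ` P)"
    by (simp add: case_prod_beta image_UN image_comp)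
  then show "(\<Union>(P, g)\<in>(\<lambda>(P, g). (P, h \<circ> g)) ` F. g ` P) = h ` V"
    using piecewise_bij_range[OF F] by simp
qed

lemma piecewise_bij_comp_right:
  assumes G: "homeo_subgroup X G" and h: "h \<in> G" and F: "piecewise_bij X G F U V"
  shows "piecewise_bij X G ((\<lambda>(P, g). (h ` P, g \<circ> inv h)) ` F) (h ` U) V"
proof (rule piecewise_bijI)
  have "inj h"
    using homeo_subgroup_bij_inv[OF G h] bij_is_inj by blast
  then have cancel: "(f \<circ> inv h) ` h ` P = f ` P" for f and P :: "'a set"
    by (simp add: image_comp o_def)
  show "finite ((\<lambda>(P, g). (h ` P, g \<circ> inv h)) ` F)"
    using piecewise_bij_finite[OF F] by simp
  show "clopen X P \<and> g \<in> G" if mem: "(P, g) \<in> (\<lambda>(P, g). (h ` P, g \<circ> inv h)) ` F" for P g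
  proof -
    obtain Q f where f: "(Q, f) \<in> F" "P = h ` Q" "g = f \<circ> inv h"
      using mem by auto
    then show ?thesis
      using homeo_subgroup_clopen_image[OF G h piecewise_bij_clopen[OF F f(1)]]
        homeo_subgroup_comp[OF G piecewise_bij_mem[OF F f(1)] homeo_subgroup_bij_inv(2)[OF G h]]
      by simp
  qed
  show "P \<inter> P' = {} \<and> g ` P \<inter> g' ` P' = {}"
    if mem: "(P, g) \<in> (\<lambda>(P, g). (h ` P, g \<circ> inv h)) ` F" "(P', g') \<in> (\<lambda>(P, g). (h ` P, g \<circ> inv h)) ` F"
      and ne: "(P, g) \<noteq> (P', g')" for P g P' g'
  proof -
    obtain Q f Q' f' where f: "(Q, f) \<in> F" "P = h ` Q" "g = f \<circ> inv h"
      and f': "(Q', f') \<in> F" "P' = h ` Q'" "g' = f' \<circ> inv h"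
      using mem by auto
    with ne have "(Q, f) \<noteq> (Q', f')"
      by auto
    then have "Q \<inter> Q' = {}" "f ` Q \<inter> f' ` Q' = {}"
      using piecewise_bij_disjoint[OF F f(1) f'(1)] piecewise_bij_disjoint_image[OF F f(1) f'(1)]
      by simp_all
    then show ?thesis
      unfolding f f' cancel using image_Int[OF \<open>inj h\<close>, of Q Q'] by simp
  qed
  show "(\<Union>(P, g)\<in>(\<lambda>(P, g). (h ` P, g \<circ> inv h)) ` F. P) = h ` U"
    using piecewise_bij_domain[OF F, symmetric] by (simp add: case_prod_beta image_Union image_image)
  show "(\<Union>(P, g)\<in>(\<lambda>(P, g). (h ` P, g \<circ> inv h)) ` F. g ` P) = V"
    using piecewise_bij_range[OF F] \<open>inj h\<close> by (simp add: case_prod_beta image_image)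
qed

lemma piecewise_bij_inverse:
  assumes G: "homeo_subgroup X G" and F: "piecewise_bij X G F U V"
  shows "piecewise_bij X G ((\<lambda>(P, g). (g ` P, inv g)) ` F) V U"
proof (rule piecewise_bijI)
  have cancel: "inv g ` g ` P = P" if "(P, g) \<in> F" for P g
    using homeo_subgroup_bij_inv(1)[OF G piecewise_bij_mem[OF F that]]
    by (simp add: bij_is_inj image_inv_f_f)
  show "finite ((\<lambda>(P, g). (g ` P, inv g)) ` F)"
    using piecewise_bij_finite[OF F] by simp
  show "clopen X P \<and> g \<in> G" if mem: "(P, g) \<in> (\<lambda>(P, g). (g ` P, inv g)) ` F" for P g
  proof -
    obtain Q f where f: "(Q, f) \<in> F" "P = f ` Q" "g = inv f"
      using mem by auto
    then show ?thesis
      using homeo_subgroup_clopen_image[OF G piecewise_bij_mem[OF F f(1)] piecewise_bij_clopen[OF F f(1)]]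
        homeo_subgroup_bij_inv(2)[OF G piecewise_bij_mem[OF F f(1)]]
      by simp
  qed
  show "P \<inter> P' = {} \<and> g ` P \<inter> g' ` P' = {}"
    if mem: "(P, g) \<in> (\<lambda>(P, g). (g ` P, inv g)) ` F" "(P', g') \<in> (\<lambda>(P, g). (g ` P, inv g)) ` F"
      and ne: "(P, g) \<noteq> (P', g')" for P g P' g'
  proof -
    obtain Q f Q' f' where f: "(Q, f) \<in> F" "P = f ` Q" "g = inv f"
      and f': "(Q', f') \<in> F" "P' = f' ` Q'" "g' = inv f'"
      using mem by auto
    with ne have "(Q, f) \<noteq> (Q', f')"
      by auto
    then show ?thesis
      using piecewise_bij_disjoint[OF F f(1) f'(1)] piecewise_bij_disjoint_image[OF F f(1) f'(1)]
      by (simp add: f f' cancel)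
  qed
  show "(\<Union>(P, g)\<in>(\<lambda>(P, g). (g ` P, inv g)) ` F. P) = V"
    using piecewise_bij_range[OF F] by (simp add: case_prod_beta)
  show "(\<Union>(P, g)\<in>(\<lambda>(P, g). (g ` P, inv g)) ` F. g ` P) = U"
    using piecewise_bij_domain[OF F] cancel by (auto simp: case_prod_beta)
qed

lemma piecewise_bij_of_partitions:
  assumes "\<Gamma> \<subseteq> G" "finite \<Gamma>" and D: "clopen_partition X \<Gamma> D U"
    and R: "set_partition \<Gamma> (\<lambda>g. g ` D g) V"
  shows "piecewise_bij X G ((\<lambda>g. (D g, g)) ` \<Gamma>) U V"
proof (rule piecewise_bijI)
  show "finite ((\<lambda>g. (D g, g)) ` \<Gamma>)"
    using assms(2) by simp
  show "clopen X P \<and> g \<in> G" if "(P, g) \<in> (\<lambda>g. (D g, g)) ` \<Gamma>" for P g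
    using that assms(1) D unfolding clopen_partition_def by auto
  show "P \<inter> P' = {} \<and> g ` P \<inter> g' ` P' = {}"
    if "(P, g) \<in> (\<lambda>g. (D g, g)) ` \<Gamma>" "(P', g') \<in> (\<lambda>g. (D g, g)) ` \<Gamma>" "(P, g) \<noteq> (P', g')"
    for P g P' g'
  proof -
    have "g \<in> \<Gamma>" "g' \<in> \<Gamma>" "P = D g" "P' = D g'" "g \<noteq> g'"
      using that by auto
    then show ?thesis
      using D R unfolding clopen_partition_def set_partition_def by simp
  qed
  show "(\<Union>(P, g)\<in>(\<lambda>g. (D g, g)) ` \<Gamma>. P) = U"
    using D unfolding clopen_partition_def by (simp add: image_image)
  show "(\<Union>(P, g)\<in>(\<lambda>g. (D g, g)) ` \<Gamma>. g ` P) = V"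
    using R unfolding set_partition_def by (simp add: image_image)
qed

text \<open>Approximate fullness indexes blocks by elements of G, so pieces carrying the same element
  are merged.\<close>
lemma piecewise_bij_merge_pieces:
  assumes F: "piecewise_bij X G F U V"
  defines "\<Lambda> \<equiv> {g. \<exists>P. (P, g) \<in> F \<and> P \<noteq> {}}" and "D \<equiv> \<lambda>g. \<Union>{P. (P, g) \<in> F}"
  shows "\<Lambda> \<subseteq> G" "finite \<Lambda>" "clopen_partition X \<Lambda> D U" "set_partition \<Lambda> (\<lambda>g. g ` D g) V"
proof -
  show "\<Lambda> \<subseteq> G"
    using piecewise_bij_mem[OF F] by (auto simp: \<Lambda>_def)
  have "\<Lambda> \<subseteq> snd ` F"
    by (force simp: \<Lambda>_def)
  then show "finite \<Lambda>"
    using piecewise_bij_finite[OF F] by (simp add: finite_subset)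
  have apart: "D g \<inter> D g' = {} \<and> g ` D g \<inter> g' ` D g' = {}" if "g \<noteq> g'" for g g'
  proof -
    have "P \<inter> P' = {} \<and> g ` P \<inter> g' ` P' = {}" if "(P, g) \<in> F" "(P', g') \<in> F" for P P'
      using piecewise_bij_disjoint[OF F that] piecewise_bij_disjoint_image[OF F that] \<open>g \<noteq> g'\<close>
      by simp
    then show ?thesis
      unfolding D_def by blast
  qed
  have clopen: "clopen X (D g)" for g
  proof -
    have "{P. (P, g) \<in> F} \<subseteq> fst ` F"
      by force
    then have "finite {P. (P, g) \<in> F}"
      using piecewise_bij_finite[OF F] by (simp add: finite_subset)
    then show ?thesis
      unfolding D_def using piecewise_bij_clopen[OF F] by (blast intro: clopen_Union)
  qed
  have "(\<Union>g\<in>\<Lambda>. D g) = (\<Union>(P, g)\<in>F. P)" "(\<Union>g\<in>\<Lambda>. g ` D g) = (\<Union>(P, g)\<in>F. g ` P)"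
    unfolding \<Lambda>_def D_def by blast+
  then show "clopen_partition X \<Lambda> D U" "set_partition \<Lambda> (\<lambda>g. g ` D g) V"
    unfolding clopen_partition_def set_partition_def
    using apart clopen piecewise_bij_domain[OF F] piecewise_bij_range[OF F]
    by (auto simp: \<Lambda>_def D_def)
qed

lemma approx_full_glue:
  assumes af: "approx_full X G" and F: "piecewise_bij X G F (topspace X) (topspace X)"
    and P\<^sub>0: "(P\<^sub>0, g\<^sub>0) \<in> F" "P\<^sub>0 \<noteq> {}"
  obtains k where "k \<in> G" "\<forall>(P, g)\<in>F. g \<noteq> g\<^sub>0 \<longrightarrow> (\<forall>x\<in>P. k x = g x)"
proof -
  define \<Lambda> where "\<Lambda> = {g. \<exists>P. (P, g) \<in> F \<and> P \<noteq> {}}"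
  define D where "D = (\<lambda>g. \<Union>{P. (P, g) \<in> F})"
  have "g\<^sub>0 \<in> \<Lambda>"
    using P\<^sub>0 by (auto simp: \<Lambda>_def)
  moreover have "\<Lambda> \<subseteq> G" "finite \<Lambda>" "clopen_partition X \<Lambda> D (topspace X)"
      "set_partition \<Lambda> (\<lambda>g. g ` D g) (topspace X)"
    unfolding \<Lambda>_def D_def by (rule piecewise_bij_merge_pieces[OF F])+
  moreover have "\<Lambda> \<subseteq> G \<and> finite \<Lambda> \<and> clopen_partition X \<Lambda> D (topspace X) \<and>
      set_partition \<Lambda> (\<lambda>g. g ` D g) (topspace X) \<and> g\<^sub>0 \<in> \<Lambda> \<longrightarrow>
      (\<exists>k\<in>G. \<forall>g\<in>\<Lambda> - {g\<^sub>0}. \<forall>x\<in>D g. k x = g x)"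
    using af unfolding approx_full_def by blast
  ultimately obtain k where k: "k \<in> G" "\<forall>g\<in>\<Lambda> - {g\<^sub>0}. \<forall>x\<in>D g. k x = g x"
    by blast
  have "\<forall>(P, g)\<in>F. g \<noteq> g\<^sub>0 \<longrightarrow> (\<forall>x\<in>P. k x = g x)"
  proof (clarify)
    fix P g x
    assume "(P, g) \<in> F" "g \<noteq> g\<^sub>0" "x \<in> P"
    then have "g \<in> \<Lambda> - {g\<^sub>0}" "x \<in> D g"
      by (auto simp: \<Lambda>_def D_def)
    then show "k x = g x"
      using k(2) by blast
  qed
  with k(1) show thesis
    by (rule that)
qed

text \<open>u carries the complement of U onto the complement of u U. There, \<tau> V is sent to \<tau> u U
  through the inverse of F, the rest V - u U of V is moved by \<tau>, and the rest of the complement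
  of V stays put.\<close>
lemma piecewise_bij_complement_swap:
  assumes G: "homeo_subgroup X G" and F: "piecewise_bij X G F U V"
    and U: "clopen X U" and V: "clopen X V"
    and u: "u \<in> G" "u ` U \<subset> V" and \<tau>: "\<tau> \<in> G" "\<tau> ` V \<subseteq> topspace X - V"
  obtains F' where "piecewise_bij X G F' (topspace X - U) (topspace X - V)"
    "(inv u ` (V - u ` U), \<tau> \<circ> u) \<in> F'"
proof -
  define T where "T = topspace X"
  define W where "W = V - u ` U"
  define E where "E = T - V - \<tau> ` V"
  define F\<^sub>1 where "F\<^sub>1 = (\<lambda>(P, g). (P, \<tau> \<circ> g)) ` (\<lambda>(P, g). (\<tau> ` P, g \<circ> inv \<tau>)) `
    (\<lambda>(P, g). (P, u \<circ> g)) ` (\<lambda>(P, g). (g ` P, inv g)) ` F"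
  define F' where "F' = (\<lambda>(P, g). (inv u ` P, g \<circ> inv (inv u))) ` (F\<^sub>1 \<union> {(W, \<tau>)} \<union> {(E, id)})"
  have bij: "bij u" "bij \<tau>" and inv_u: "inv u \<in> G"
    using homeo_subgroup_bij_inv G u(1) \<tau>(1) by blast+
  have clopen: "clopen X W" "clopen X E"
    using U V homeo_subgroup_clopen_image[OF G] u(1) \<tau>(1)
    by (simp_all add: W_def E_def T_def clopen_Diff clopen_topspace)
  have F\<^sub>1: "piecewise_bij X G F\<^sub>1 (\<tau> ` V) (\<tau> ` u ` U)"
    unfolding F\<^sub>1_def
    by (intro piecewise_bij_comp_left piecewise_bij_comp_right piecewise_bij_inverse G F u(1) \<tau>(1))
  have "piecewise_bij X G (F\<^sub>1 \<union> {(W, \<tau>)}) (\<tau> ` V \<union> W) (\<tau> ` u ` U \<union> \<tau> ` W)"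
  proof (rule piecewise_bij_Un[OF F\<^sub>1 piecewise_bij_singleton[OF \<tau>(1) clopen(1)]])
    show "\<tau> ` V \<inter> W = {}"
      using \<tau>(2) by (auto simp: W_def)
    show "\<tau> ` u ` U \<inter> \<tau> ` W = {}"
      using bij(2) by (simp add: W_def bij_is_inj image_Int[symmetric])
  qed
  then have "piecewise_bij X G (F\<^sub>1 \<union> {(W, \<tau>)} \<union> {(E, id)})
      (\<tau> ` V \<union> W \<union> E) (\<tau> ` u ` U \<union> \<tau> ` W \<union> id ` E)"
  proof (rule piecewise_bij_Un[OF _ piecewise_bij_singleton[OF homeo_subgroup_id[OF G] clopen(2)]])
    show "(\<tau> ` V \<union> W) \<inter> E = {}" "(\<tau> ` u ` U \<union> \<tau> ` W) \<inter> id ` E = {}"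
      using u(2) by (auto simp: W_def E_def)
  qed
  then have F': "piecewise_bij X G F' (inv u ` (\<tau> ` V \<union> W \<union> E)) (\<tau> ` u ` U \<union> \<tau> ` W \<union> id ` E)"
    unfolding F'_def by (rule piecewise_bij_comp_right[OF G inv_u])
  have "\<tau> ` V \<union> W \<union> E = T - u ` U"
    using u(2) \<tau>(2) clopen_subset[OF V] by (auto simp: W_def E_def T_def)
  then have "inv u ` (\<tau> ` V \<union> W \<union> E) = T - U"
    using homeo_subgroup_image_topspace[OF G inv_u] bij(1)
    by (simp add: image_set_diff bij_is_inj bij_imp_bij_inv image_inv_f_f T_def)
  moreover have "\<tau> ` u ` U \<union> \<tau> ` W \<union> id ` E = T - V"
    using u(2) \<tau>(2) by (auto simp: W_def E_def T_def)
  ultimately have "piecewise_bij X G F' (topspace X - U) (topspace X - V)"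
    using F' by (simp add: T_def)
  moreover have "(inv u ` W, \<tau> \<circ> u) \<in> F'"
    unfolding F'_def inv_inv_eq[OF bij(1)] by (rule image_eqI[where x = "(W, \<tau>)"]) auto
  ultimately show thesis
    unfolding W_def by (rule that)
qed

lemma piecewise_bij_complement:
  assumes X: "cantor_space X" and G: "homeo_subgroup X G" and vig: "vigorous X G"
    and F: "piecewise_bij X G F U V" and U: "U \<in> Kset X" and V: "V \<in> Kset X"
  obtains F' P\<^sub>0 f where "piecewise_bij X G F' (topspace X - U) (topspace X - V)"
    "(P\<^sub>0, f) \<in> F'" "P\<^sub>0 \<noteq> {}" "f ` U \<inter> V = {}"
proof -
  have U': "clopen X U" "U \<noteq> {}" "U \<subset> topspace X" and V': "clopen X V" "V \<noteq> {}" "V \<subset> topspace X"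
    using U V by (simp_all add: Kset_def)
  obtain Q where Q: "clopen X Q" "Q \<noteq> {}" "Q \<subset> V"
    using cantor_space_clopen_split[OF X V'(1,2)] by blast
  obtain u where u: "u \<in> G" "u ` U \<subseteq> Q"
    using vigorous_mapsto[OF vig U'(1) Q(1) U'(2) Q(2) U'(3)] Q(3) V'(3) by blast
  have "clopen X (topspace X - V)" "topspace X - V \<noteq> {}" "topspace X - V \<subset> topspace X"
    using V' clopen_topspace clopen_Diff by blast+
  then obtain \<tau> where \<tau>: "\<tau> \<in> G" "\<tau> ` V \<subseteq> topspace X - V"
    using vigorous_mapsto[OF vig V'(1) _ V'(2) _ V'(3)] by blast
  have uU: "u ` U \<subset> V"
    using u(2) Q(3) by blast
  obtain F' where F': "piecewise_bij X G F' (topspace X - U) (topspace X - V)"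
    "(inv u ` (V - u ` U), \<tau> \<circ> u) \<in> F'"
    by (rule piecewise_bij_complement_swap[OF G F U'(1) V'(1) u(1) uU \<tau>])
  moreover have "inv u ` (V - u ` U) \<noteq> {}"
    using uU by blast
  moreover have "(\<tau> \<circ> u) ` U \<inter> V = {}"
    using uU \<tau>(2) by (auto simp: image_comp[symmetric])
  ultimately show thesis
    by (rule that)
qed

theorem approx_full_imp_strongly_approx_full:
  assumes X: "cantor_space X" and G: "homeo_subgroup X G" and vig: "vigorous X G"
    and af: "approx_full X G"
  shows "strongly_approx_full X G"
  unfolding strongly_approx_full_def
proof (intro allI impI, elim conjE)
  fix U V \<Gamma> D
  assume U: "U \<in> Kset X" and V: "V \<in> Kset X" and \<Gamma>: "\<Gamma> \<subseteq> G" "finite \<Gamma>"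
    and D: "clopen_partition X \<Gamma> D U" and R: "set_partition \<Gamma> (\<lambda>g. g ` D g) V"
  have F: "piecewise_bij X G ((\<lambda>g. (D g, g)) ` \<Gamma>) U V"
    by (rule piecewise_bij_of_partitions[OF \<Gamma> D R])
  obtain F' P\<^sub>0 f where F': "piecewise_bij X G F' (topspace X - U) (topspace X - V)"
    and P\<^sub>0: "(P\<^sub>0, f) \<in> F'" "P\<^sub>0 \<noteq> {}" and f: "f ` U \<inter> V = {}"
    by (rule piecewise_bij_complement[OF X G vig F U V])
  have "U \<subseteq> topspace X" "V \<subseteq> topspace X"
    using U V by (auto simp: Kset_def)
  then have whole: "piecewise_bij X G ((\<lambda>g. (D g, g)) ` \<Gamma> \<union> F') (topspace X) (topspace X)"
    using piecewise_bij_Un[OF F F'] by (simp add: Un_Diff_cancel Un_absorb1 Int_Diff)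
  obtain k where k: "k \<in> G" "\<forall>(P, g)\<in>(\<lambda>g. (D g, g)) ` \<Gamma> \<union> F'. g \<noteq> f \<longrightarrow> (\<forall>x\<in>P. k x = g x)"
    by (rule approx_full_glue[OF af whole UnI2[OF P\<^sub>0(1)] P\<^sub>0(2)])
  have not_f: "g \<noteq> f" if g: "g \<in> \<Gamma>" for g
  proof -
    obtain x where "x \<in> D g"
      using D g unfolding clopen_partition_def by blast
    then have "g x \<in> V" "x \<in> U"
      using D R g unfolding clopen_partition_def set_partition_def by blast+
    then show ?thesis
      using f by blast
  qed
  show "\<exists>k\<in>G. \<forall>g\<in>\<Gamma>. \<forall>x\<in>D g. k x = g x"
  proof (intro bexI[OF _ k(1)] ballI)
    fix g x
    assume "g \<in> \<Gamma>" "x \<in> D g"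
    moreover have "(D g, g) \<in> (\<lambda>g. (D g, g)) ` \<Gamma> \<union> F'"
      using \<open>g \<in> \<Gamma>\<close> by blast
    ultimately show "k x = g x"
      using bspec[OF k(2)] not_f by fastforce
  qed
qed

lemma clopen_partition_remove:
  assumes "clopen_partition X I P U" "i \<in> I"
  shows "clopen_partition X (I - {i}) P (U - P i)"
  using assms unfolding clopen_partition_def by blast

lemma set_partition_remove:
  assumes "set_partition I P U" "i \<in> I"
  shows "set_partition (I - {i}) P (U - P i)"
  using assms unfolding set_partition_def by blast

lemma Kset_topspace_Diff:
  "clopen X A \<Longrightarrow> A \<noteq> {} \<Longrightarrow> topspace X - A \<noteq> {} \<Longrightarrow> topspace X - A \<in> Kset X"
  using clopen_subset[of X A] by (auto simp: Kset_def clopen_Diff clopen_topspace)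

theorem strongly_approx_full_imp_approx_full:
  assumes G: "homeo_subgroup X G" and saf: "strongly_approx_full X G"
  shows "approx_full X G"
  unfolding approx_full_def
proof (intro allI impI, elim conjE)
  fix \<Gamma> D \<delta>
  assume \<Gamma>: "\<Gamma> \<subseteq> G" "finite \<Gamma>" and D: "clopen_partition X \<Gamma> D (topspace X)"
    and R: "set_partition \<Gamma> (\<lambda>g. g ` D g) (topspace X)" and \<delta>: "\<delta> \<in> \<Gamma>"
  show "\<exists>k\<in>G. \<forall>g\<in>\<Gamma> - {\<delta>}. \<forall>x\<in>D g. k x = g x"
  proof (cases "\<Gamma> - {\<delta>} = {}")
    case True
    then show ?thesis
      using homeo_subgroup_id[OF G] by blast
  next
    case False
    have D': "clopen_partition X (\<Gamma> - {\<delta>}) D (topspace X - D \<delta>)"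
      by (rule clopen_partition_remove[OF D \<delta>])
    have R': "set_partition (\<Gamma> - {\<delta>}) (\<lambda>g. g ` D g) (topspace X - \<delta> ` D \<delta>)"
      using set_partition_remove[OF R \<delta>] by simp
    obtain g\<^sub>0 where g\<^sub>0: "g\<^sub>0 \<in> \<Gamma> - {\<delta>}"
      using False by blast
    have "D g\<^sub>0 \<noteq> {}" "D g\<^sub>0 \<subseteq> topspace X - D \<delta>"
      using D' g\<^sub>0 unfolding clopen_partition_def by blast+
    moreover have "g\<^sub>0 ` D g\<^sub>0 \<noteq> {}" "g\<^sub>0 ` D g\<^sub>0 \<subseteq> topspace X - \<delta> ` D \<delta>"
      using R' g\<^sub>0 unfolding set_partition_def by blast+
    ultimately have "topspace X - D \<delta> \<noteq> {}" "topspace X - \<delta> ` D \<delta> \<noteq> {}"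
      by blast+
    moreover have "clopen X (D \<delta>)" "D \<delta> \<noteq> {}"
      using D \<delta> unfolding clopen_partition_def by blast+
    moreover have "clopen X (\<delta> ` D \<delta>)"
      using homeo_subgroup_clopen_image[OF G _ \<open>clopen X (D \<delta>)\<close>] \<delta> \<Gamma>(1) by blast
    ultimately have "topspace X - D \<delta> \<in> Kset X" "topspace X - \<delta> ` D \<delta> \<in> Kset X"
      by (simp_all add: Kset_topspace_Diff)
    with saf \<Gamma> D' R' show ?thesis
      unfolding strongly_approx_full_def by blast
  qed
qed

theorem corollary2p13:
  fixes X :: "'a topology" and G :: "('a \<Rightarrow> 'a) set"
  assumes "cantor_space X"
    and "homeo_subgroup X G"
    and "vigorous X G"
  shows "(approx_full X G \<longrightarrow> strongly_approx_full X G) \<and>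
         (approx_full X G \<longleftrightarrow> strongly_approx_full X G)"
  using approx_full_imp_strongly_approx_full[OF assms]
    strongly_approx_full_imp_approx_full[OF assms(2)] by blast

end
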